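(* Let $m$ be an even integer with $m\ge 62$, and let $\beta(m)$ be the largest root of $Z(x)=x^3-x^2-(m-2)x+m-3$. Then $\sqrt{m-2}<\beta(m)<\sqrt{m-1.85}$. *)

theory Defs
  imports Complex_Main
begin

definition Zpoly :: "int \<Rightarrow> real \<Rightarrow> real" where
  "Zpoly m x = x ^ 3 - x ^ 2 - (real_of_int m - 2) * x + real_of_int m - 3"

definition beta :: "int \<Rightarrow> real" where
  "beta m = Max {x. Zpoly m x = 0}"

end

theory Submission
  imports Defs "HOL-Computational_Algebra.Polynomial"
begin

text \<open>If x^2 = m - c then Z(x) = (2 - c) x + c - 3 is linear in x. Hence Z(sqrt(m - 2)) = -1 and
  Z(sqrt(m - 1.85)) = (3 sqrt(m - 1.85) - 23) / 20, which is positive once m - 1.85 > (23/3)^2.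
  Since Z is strictly increasing on [sqrt(m - 2), \<infinity>), it has exactly one root there, which lies
  strictly between the two square roots and is the largest root.\<close>

lemma Zpoly_eq_poly: "Zpoly m = poly [:real_of_int m - 3, 2 - real_of_int m, -1, 1:]"
  by (auto simp: Zpoly_def algebra_simps power2_eq_square power3_eq_cube)

lemma finite_Zpoly_roots: "finite {x. Zpoly m x = 0}"
  unfolding Zpoly_eq_poly by (rule poly_roots_finite) simp

lemma continuous_on_Zpoly: "continuous_on S (Zpoly m)"
  unfolding Zpoly_def by (intro continuous_intros)

lemma Zpoly_eq_linear_if_square_eq:
  assumes "x\<^sup>2 = real_of_int m - c"
  shows "Zpoly m x = (2 - c) * x + c - 3"
proof -
  have "x ^ 3 = x * x\<^sup>2" by (simp add: power2_eq_square power3_eq_cube)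
  then show ?thesis using assms by (simp add: Zpoly_def algebra_simps)
qed

lemma strict_mono_on_Zpoly:
  assumes "1 \<le> b" and "real_of_int m - 2 \<le> b\<^sup>2"
  shows "strict_mono_on {b..} (Zpoly m)"
proof (rule strict_mono_onI)
  fix x y assume "x \<in> {b..}" "y \<in> {b..}" "x < y"
  then have "b \<le> x" "x < y" by auto
  have diff: "Zpoly m y - Zpoly m x = (y - x) * ((y\<^sup>2 - y) + (x * y - x) + (x\<^sup>2 - (real_of_int m - 2)))"
    by (simp add: Zpoly_def algebra_simps power2_eq_square power3_eq_cube)
  have "1 < y" using \<open>b \<le> x\<close> \<open>x < y\<close> assms(1) by simp
  have "y\<^sup>2 - y = y * (y - 1)" by (simp add: power2_eq_square algebra_simps)
  also have "\<dots> > 0" using \<open>1 < y\<close> by simp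
  finally have "y\<^sup>2 - y > 0" .
  moreover have "x * y - x = x * (y - 1)" by (simp add: algebra_simps)
  then have "x * y - x \<ge> 0" using \<open>b \<le> x\<close> \<open>1 < y\<close> assms(1) by simp
  moreover have "b\<^sup>2 \<le> x\<^sup>2" using \<open>b \<le> x\<close> assms(1) by (intro power_mono) auto
  ultimately have "0 < (y\<^sup>2 - y) + (x * y - x) + (x\<^sup>2 - (real_of_int m - 2))"
    using assms(2) by linarith
  then have "Zpoly m y - Zpoly m x > 0"
    unfolding diff using \<open>x < y\<close> by (intro mult_pos_pos) auto
  then show "Zpoly m x < Zpoly m y" by simp
qed

lemma Max_zeros_strictly_between:
  fixes f :: "real \<Rightarrow> real"
  assumes "finite {x. f x = 0}" and "continuous_on {a..b} f" and "a \<le> b"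
    and "f a < 0" and "0 < f b" and "strict_mono_on {a..} f"
  shows "a < Max {x. f x = 0} \<and> Max {x. f x = 0} < b"
proof -
  obtain r where r: "a \<le> r" "r \<le> b" "f r = 0"
    using IVT'[of f a 0 b] assms(2-5) by auto
  have "r \<le> Max {x. f x = 0}" by (rule Max_ge[OF assms(1)]) (simp add: r(3))
  moreover have "r \<noteq> a" using r(3) assms(4) by auto
  moreover have root: "f (Max {x. f x = 0}) = 0"
    using Max_in[OF assms(1)] r(3) by blast
  moreover have "\<not> b \<le> Max {x. f x = 0}"
  proof
    assume le: "b \<le> Max {x. f x = 0}"
    then have "b \<in> {a..}" "Max {x. f x = 0} \<in> {a..}" using assms(3) by auto
    then have "f b \<le> f (Max {x. f x = 0})" using strict_mono_on_leD[OF assms(6)] le by blast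
    then show False using root assms(5) by simp
  qed
  ultimately show ?thesis using r(1) by linarith
qed

theorem lemma2p4:
  fixes m :: int
  assumes "even m" and "m \<ge> 62"
  shows "sqrt (real_of_int m - 2) < beta m \<and> beta m < sqrt (real_of_int m - 1.85)"
proof -
  define a where "a = sqrt (real_of_int m - 2)"
  define b where "b = sqrt (real_of_int m - 1.85)"
  have M: "real_of_int m \<ge> 62" using assms(2) by simp
  have a_sq: "a\<^sup>2 = real_of_int m - 2" and b_sq: "b\<^sup>2 = real_of_int m - 1.85"
    using M by (simp_all add: a_def b_def)
  have "1 \<le> a" unfolding a_def using M by simp
  have "a \<le> b" unfolding a_def b_def by simp
  have "23 / 3 < b" unfolding b_def using M by (intro real_less_rsqrt) (simp add: power2_eq_square)
  have "Zpoly m a < 0" using Zpoly_eq_linear_if_square_eq[OF a_sq] by simp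
  moreover have "0 < Zpoly m b" using Zpoly_eq_linear_if_square_eq[OF b_sq] \<open>23 / 3 < b\<close> by simp
  moreover have "strict_mono_on {a..} (Zpoly m)" using \<open>1 \<le> a\<close> a_sq by (intro strict_mono_on_Zpoly) auto
  ultimately have "a < Max {x. Zpoly m x = 0} \<and> Max {x. Zpoly m x = 0} < b"
    by (intro Max_zeros_strictly_between finite_Zpoly_roots continuous_on_Zpoly \<open>a \<le> b\<close>)
  then show ?thesis unfolding beta_def a_def b_def .
qed

end
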